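(* Let $\mathbb{K}$ be an algebraically closed field, let $A$ be a $\mathbb{K}$-algebra which is an integral domain, and let $\delta$ be a non-negative subdegree on $A$ with minimal presentation $\delta=\max_{1\le i\le N}\delta_i$. Let $X:=\operatorname{Spec}A$, viewed as an open subset of $\bar X^\delta:=\operatorname{Proj}A^\delta$. Then the number of irreducible components of $X_\infty:=\bar X^\delta\setminus X$ is $N$ if none of the $\delta_i$ is the zero function, and $N-1$ otherwise.
   Context: A degree-like function on a $\mathbb{K}$-algebra $A$ is a map $\delta: A\setminus\{0\}\to\mathbb{Z}\cup\{-\infty\}$ such that $\delta(c)=0$ for nonzero constants $c\in\mathbb{K}$; $\delta(f+g)\le\max\{\delta(f),\delta(g)\}$, with strict inequality implying $\delta(f)=\delta(g)$; and $\delta(fg)\le\delta(f)+\delta(g)$. It is a semidegree if $\delta(fg)=\delta(f)+\delta(g)$, and a subdegree if it is the pointwise maximum of semidegrees $\delta_1,\dots,\delta_N$; the presentation is minimal if for each $i$ there is $f$ with $\delta_i(f)>\delta_j(f)$ for all $j\neq i$. With $F_d:=\{f\in A:\delta(f)\le d\}$, $A^\delta:=\bigoplus_{d\ge0}F_d\cong\sum_{d\ge0}F_dt^d$, with $(f)_d$ the copy of $f$ in degree $d$. The open embedding $X=\operatorname{Spec}A\hookrightarrow\operatorname{Proj}A^\delta$ is $\mathfrak p\mapsto\bigoplus_{d\ge0}(\mathfrak p\cap F_d)$, whose image is the complement of $V((1)_1)$. *)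

theory Defs
  imports "HOL-Computational_Algebra.Polynomial" "HOL-Library.Extended_Real"
begin

definition alg_closed :: "'k::field itself \<Rightarrow> bool" where
  "alg_closed _ \<longleftrightarrow> (\<forall>p :: 'k poly. degree p > 0 \<longrightarrow> (\<exists>x. poly p x = 0))"

definition k_algebra :: "('k::field \<Rightarrow> 'a::idom) \<Rightarrow> bool" where
  "k_algebra emb \<longleftrightarrow> emb 1 = 1 \<and> (\<forall>x y. emb (x + y) = emb x + emb y)
     \<and> (\<forall>x y. emb (x * y) = emb x * emb y)"

section \<open>Degree-like functions (values in Z \<union> {-\<infinity>}, only nonzero arguments matter)\<close>

definition degree_like :: "('k::field \<Rightarrow> 'a::idom) \<Rightarrow> ('a \<Rightarrow> ereal) \<Rightarrow> bool" where
  "degree_like emb \<delta> \<longleftrightarrow>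
     (\<forall>f. f \<noteq> 0 \<longrightarrow> \<delta> f = -\<infinity> \<or> (\<exists>n::int. \<delta> f = ereal (real_of_int n)))
   \<and> (\<forall>c. c \<noteq> 0 \<longrightarrow> \<delta> (emb c) = 0)
   \<and> (\<forall>f g. f \<noteq> 0 \<and> g \<noteq> 0 \<and> f + g \<noteq> 0 \<longrightarrow>
        \<delta> (f + g) \<le> max (\<delta> f) (\<delta> g)
        \<and> (\<delta> (f + g) < max (\<delta> f) (\<delta> g) \<longrightarrow> \<delta> f = \<delta> g))
   \<and> (\<forall>f g. f \<noteq> 0 \<and> g \<noteq> 0 \<longrightarrow> \<delta> (f * g) \<le> \<delta> f + \<delta> g)"

definition semidegree :: "('k::field \<Rightarrow> 'a::idom) \<Rightarrow> ('a \<Rightarrow> ereal) \<Rightarrow> bool" where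
  "semidegree emb \<delta> \<longleftrightarrow> degree_like emb \<delta>
     \<and> (\<forall>f g. f \<noteq> 0 \<and> g \<noteq> 0 \<longrightarrow> \<delta> (f * g) = \<delta> f + \<delta> g)"

definition subdegree_presentation ::
  "('k::field \<Rightarrow> 'a::idom) \<Rightarrow> ('a \<Rightarrow> ereal) \<Rightarrow> nat \<Rightarrow> (nat \<Rightarrow> 'a \<Rightarrow> ereal) \<Rightarrow> bool" where
  "subdegree_presentation emb \<delta> N \<delta>s \<longleftrightarrow> N \<ge> 1 \<and> degree_like emb \<delta>
     \<and> (\<forall>i<N. semidegree emb (\<delta>s i))
     \<and> (\<forall>f. f \<noteq> 0 \<longrightarrow> \<delta> f = Max ((\<lambda>i. \<delta>s i f) ` {..<N}))"

definition minimal_presentation :: "nat \<Rightarrow> (nat \<Rightarrow> 'a::idom \<Rightarrow> ereal) \<Rightarrow> bool" where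
  "minimal_presentation N \<delta>s \<longleftrightarrow>
     (\<forall>i<N. \<exists>f. f \<noteq> 0 \<and> (\<forall>j<N. j \<noteq> i \<longrightarrow> \<delta>s j f < \<delta>s i f))"

definition nonneg_on_nonzero :: "('a::idom \<Rightarrow> ereal) \<Rightarrow> bool" where
  "nonneg_on_nonzero \<delta> \<longleftrightarrow> (\<forall>f. f \<noteq> 0 \<longrightarrow> \<delta> f \<ge> 0)"

section \<open>The graded algebra A^\<delta> = sum F_d t^d inside A[t]\<close>

definition Fdeg :: "('a::idom \<Rightarrow> ereal) \<Rightarrow> nat \<Rightarrow> 'a set" where
  "Fdeg \<delta> d = {f. f = 0 \<or> \<delta> f \<le> ereal (real d)}"

definition Rdelta :: "('a::idom \<Rightarrow> ereal) \<Rightarrow> 'a poly set" where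
  "Rdelta \<delta> = {p. \<forall>d. coeff p d \<in> Fdeg \<delta> d}"

definition hom_ideal :: "'a::idom poly set \<Rightarrow> 'a poly set \<Rightarrow> bool" where
  "hom_ideal R I \<longleftrightarrow> I \<subseteq> R \<and> 0 \<in> I
     \<and> (\<forall>p\<in>I. \<forall>q\<in>I. p + q \<in> I) \<and> (\<forall>p\<in>I. - p \<in> I)
     \<and> (\<forall>r\<in>R. \<forall>p\<in>I. r * p \<in> I)
     \<and> (\<forall>p\<in>I. \<forall>d. monom (coeff p d) d \<in> I)"

definition hom_prime :: "'a::idom poly set \<Rightarrow> 'a poly set \<Rightarrow> bool" where
  "hom_prime R P \<longleftrightarrow> hom_ideal R P \<and> P \<noteq> R
     \<and> (\<forall>p\<in>R. \<forall>q\<in>R. p * q \<in> P \<longrightarrow> p \<in> P \<or> q \<in> P)"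

definition irrelevant :: "'a::idom poly set \<Rightarrow> 'a poly set" where
  "irrelevant R = {p \<in> R. coeff p 0 = 0}"

definition Proj :: "'a::idom poly set \<Rightarrow> 'a poly set set" where
  "Proj R = {P. hom_prime R P \<and> \<not> irrelevant R \<subseteq> P}"

definition proj_closed :: "'a::idom poly set \<Rightarrow> 'a poly set set \<Rightarrow> bool" where
  "proj_closed R Z \<longleftrightarrow> (\<exists>S. S \<subseteq> R \<and> Z = {P \<in> Proj R. S \<subseteq> P})"

definition prime_ideal :: "'a::idom set \<Rightarrow> bool" where
  "prime_ideal p \<longleftrightarrow> 0 \<in> p \<and> (\<forall>a\<in>p. \<forall>b\<in>p. a + b \<in> p) \<and> (\<forall>r. \<forall>a\<in>p. r * a \<in> p)
     \<and> p \<noteq> UNIV \<and> (\<forall>a b. a * b \<in> p \<longrightarrow> a \<in> p \<or> b \<in> p)"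

definition Spec :: "'a::idom set set" where
  "Spec = {p. prime_ideal p}"

definition spec_to_proj :: "('a::idom \<Rightarrow> ereal) \<Rightarrow> 'a set \<Rightarrow> 'a poly set" where
  "spec_to_proj \<delta> p = {q \<in> Rdelta \<delta>. \<forall>d. coeff q d \<in> p}"

definition X_infinity :: "('a::idom \<Rightarrow> ereal) \<Rightarrow> 'a poly set set" where
  "X_infinity \<delta> = Proj (Rdelta \<delta>) - spec_to_proj \<delta> ` Spec"

definition irreducible_wrt :: "('b set \<Rightarrow> bool) \<Rightarrow> 'b set \<Rightarrow> bool" where
  "irreducible_wrt cl Z \<longleftrightarrow> Z \<noteq> {} \<and>
     (\<forall>C1 C2. cl C1 \<and> cl C2 \<and> Z \<subseteq> C1 \<union> C2 \<longrightarrow> Z \<subseteq> C1 \<or> Z \<subseteq> C2)"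

definition irreducible_components :: "('b set \<Rightarrow> bool) \<Rightarrow> 'b set \<Rightarrow> 'b set set" where
  "irreducible_components cl Y = {Z. Z \<subseteq> Y \<and> irreducible_wrt cl Z
     \<and> (\<forall>Z'. Z \<subseteq> Z' \<and> Z' \<subseteq> Y \<and> irreducible_wrt cl Z' \<longrightarrow> Z' = Z)}"

end

theory Submission
  imports Defs
begin

text \<open>A homogeneous element of \<open>A\<^sup>\<delta>\<close> of degree \<open>d\<close> is some \<open>(f)\<^sub>d\<close> with \<open>\<delta> f \<le> d\<close>, and
  \<open>X\<^sub>\<infinity>\<close> is the zero set of \<open>t = (1)\<^sub>1\<close>. For each semidegree \<open>\<delta>\<^sub>i\<close> the elements \<open>(f)\<^sub>d\<close> with
  \<open>\<delta>\<^sub>i f < d\<close> span a homogeneous prime \<open>P\<^sub>i\<close> containing \<open>t\<close> (primality is a Gauss lemma for the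
  valuation-like \<open>\<delta>\<^sub>i\<close>). \<open>P\<^sub>i\<close> is relevant exactly when \<open>\<delta>\<^sub>i \<noteq> 0\<close>, and minimality of the
  presentation makes the \<open>P\<^sub>i\<close> pairwise incomparable. Conversely a relevant prime \<open>P \<ni> t\<close>
  contains some \<open>P\<^sub>i\<close>: otherwise choose \<open>(f\<^sub>i)\<^sub>d\<^sub>i \<in> P\<^sub>i - P\<close>; their product \<open>(F)\<^sub>D \<notin> P\<close> has
  \<open>\<delta>\<^sub>j F < D\<close> for all \<open>j\<close>, hence \<open>\<delta> F < D\<close> and \<open>(F)\<^sub>D = t (F)\<^sub>D\<^sub>-\<^sub>1 \<in> P\<close>. So the irreducible
  components of \<open>X\<^sub>\<infinity>\<close> are the closures of the points \<open>P\<^sub>i\<close> with \<open>\<delta>\<^sub>i \<noteq> 0\<close>, and at most one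
  \<open>\<delta>\<^sub>i\<close> vanishes identically.\<close>

lemma ereal_add_less_le_mono: "x < ereal r \<Longrightarrow> y \<le> ereal s \<Longrightarrow> x + y < ereal (r + s)"
  by (cases x; cases y) auto

lemma ereal_add_le_mono: "x \<le> ereal r \<Longrightarrow> y \<le> ereal s \<Longrightarrow> x + y \<le> ereal (r + s)"
  by (cases x; cases y) auto

lemma eventually_ereal_add_minus_less:
  "x \<noteq> \<infinity> \<Longrightarrow> eventually (\<lambda>n::nat. x + ereal (- real n) < ereal c) sequentially"
proof (cases x)
  case (real r)
  have "eventually (\<lambda>n::nat. real n > r - c) sequentially"
    by (rule eventually_sequentiallyI[of "nat \<lceil>r - c\<rceil> + 1"]) linarith
  thus ?thesis using real by (auto elim: eventually_mono)
qed auto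

lemma k_algebra_emb_0: "k_algebra emb \<Longrightarrow> emb 0 = 0"
proof -
  assume "k_algebra emb"
  hence "emb 0 = emb 0 + emb 0" unfolding k_algebra_def by (metis add_0)
  thus ?thesis by (metis add_cancel_right_right)
qed

lemma k_algebra_emb_minus_1: "k_algebra emb \<Longrightarrow> emb (-1) = -1"
proof -
  assume emb: "k_algebra emb"
  hence "emb (-1 + 1) = emb (-1) + 1" unfolding k_algebra_def by metis
  thus ?thesis using k_algebra_emb_0[OF emb] by (simp add: add_eq_0_iff2)
qed

lemma degree_like_int_or_minf:
  "degree_like emb D \<Longrightarrow> f \<noteq> 0 \<Longrightarrow> D f = -\<infinity> \<or> (\<exists>n::int. D f = ereal (real_of_int n))"
  unfolding degree_like_def by blast

lemma degree_like_not_infinity: "degree_like emb D \<Longrightarrow> f \<noteq> 0 \<Longrightarrow> D f \<noteq> \<infinity>"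
  unfolding degree_like_def by fastforce

lemma degree_like_add_le:
  "degree_like emb D \<Longrightarrow> f \<noteq> 0 \<Longrightarrow> g \<noteq> 0 \<Longrightarrow> f + g \<noteq> 0 \<Longrightarrow> D (f + g) \<le> max (D f) (D g)"
  unfolding degree_like_def by blast

lemma degree_like_mult_le:
  "degree_like emb D \<Longrightarrow> f \<noteq> 0 \<Longrightarrow> g \<noteq> 0 \<Longrightarrow> D (f * g) \<le> D f + D g"
  unfolding degree_like_def by blast

lemma degree_like_one: "degree_like emb D \<Longrightarrow> k_algebra emb \<Longrightarrow> D 1 = 0"
  unfolding degree_like_def k_algebra_def by (metis one_neq_zero)

lemma degree_like_minus:
  fixes f :: "'a::idom"
  assumes D: "degree_like emb D" and emb: "k_algebra emb" and "f \<noteq> 0"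
  shows "D (- f) = D f"
proof -
  have "D (emb (-1)) = 0" using D unfolding degree_like_def by simp
  hence "D (-1) = 0" using k_algebra_emb_minus_1[OF emb] by simp
  hence "D (- g) \<le> D g" if "g \<noteq> 0" for g :: 'a
    using degree_like_mult_le[OF D, of "-1" g] that by simp
  from this[of f] this[of "- f"] show ?thesis using \<open>f \<noteq> 0\<close> by simp
qed

lemma semidegree_mult:
  "semidegree emb D \<Longrightarrow> f \<noteq> 0 \<Longrightarrow> g \<noteq> 0 \<Longrightarrow> D (f * g) = D f + D g"
  unfolding semidegree_def by blast

lemma semidegree_power_le:
  assumes D: "semidegree emb D" and emb: "k_algebra emb" and "u \<noteq> 0" "D u \<le> ereal c"
  shows "D (u ^ n) \<le> ereal (real n * c)"
proof (induction n)
  case 0 thus ?case using degree_like_one[OF _ emb, of D] D by (simp add: semidegree_def)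
next
  case (Suc n)
  have "D (u ^ Suc n) = D u + D (u ^ n)" using semidegree_mult[OF D, of u "u ^ n"] assms(3) by simp
  also have "\<dots> \<le> ereal (c + real n * c)" using assms(4) Suc by (intro ereal_add_le_mono)
  finally show ?case by (simp add: algebra_simps)
qed

lemma semidegree_power_eq_0:
  assumes D: "semidegree emb D" and emb: "k_algebra emb" and "u \<noteq> 0" "D u = 0"
  shows "D (u ^ n) = 0"
proof (induction n)
  case 0 thus ?case using degree_like_one[OF _ emb, of D] D by (simp add: semidegree_def)
qed (use semidegree_mult[OF D] assms(3,4) in simp)

lemma degree_like_add_dominant:
  assumes D: "degree_like emb D" and emb: "k_algebra emb" and "x \<noteq> 0" and "y = 0 \<or> D y < D x"
  shows "x + y \<noteq> 0 \<and> D (x + y) = D x"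
proof (cases "y = 0")
  case False
  hence lt: "D y < D x" using assms by simp
  have ne: "x + y \<noteq> 0"
  proof
    assume "x + y = 0"
    hence "y = - x" by (simp add: add_eq_0_iff2)
    thus False using lt degree_like_minus[OF D emb \<open>x \<noteq> 0\<close>] by simp
  qed
  have "D (x + y) \<le> max (D x) (D y)"
    using degree_like_add_le[OF D \<open>x \<noteq> 0\<close> False ne] .
  moreover have "\<not> D (x + y) < max (D x) (D y)"
  proof
    assume "D (x + y) < max (D x) (D y)"
    hence "D x = D y" using D \<open>x \<noteq> 0\<close> False ne unfolding degree_like_def by blast
    thus False using lt by simp
  qed
  ultimately show ?thesis using ne lt by (simp add: max.absorb1 less_imp_le)
qed (use assms in simp)

definition deg_below :: "('a::idom \<Rightarrow> ereal) \<Rightarrow> ereal \<Rightarrow> 'a \<Rightarrow> bool" where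
  "deg_below D c x \<longleftrightarrow> x = 0 \<or> D x < c"

lemma deg_below_add:
  assumes "degree_like emb D" "deg_below D c x" "deg_below D c y"
  shows "deg_below D c (x + y)"
proof (cases "x = 0 \<or> y = 0 \<or> x + y = 0")
  case False
  hence "D (x + y) \<le> max (D x) (D y)" using degree_like_add_le[OF assms(1)] by blast
  also have "\<dots> < c" using assms False by (simp add: deg_below_def)
  finally show ?thesis by (simp add: deg_below_def)
qed (use assms in \<open>auto simp: deg_below_def\<close>)

lemma deg_below_sum:
  assumes "degree_like emb D" "\<And>k. k \<in> K \<Longrightarrow> deg_below D c (g k)"
  shows "deg_below D c (sum g K)"
  using assms(2)
proof (induction K rule: infinite_finite_induct)
  case (insert x F)
  thus ?case using deg_below_add[OF assms(1)] by simp
qed (simp_all add: deg_below_def)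

lemma deg_below_minus:
  "degree_like emb D \<Longrightarrow> k_algebra emb \<Longrightarrow> deg_below D c x \<Longrightarrow> deg_below D c (- x)"
  using degree_like_minus[of emb D x] unfolding deg_below_def by (cases "x = 0") auto

section \<open>Coefficients of maximal excess\<close>

definition max_excess_coeff :: "('a::idom \<Rightarrow> ereal) \<Rightarrow> 'a poly \<Rightarrow> real \<Rightarrow> nat \<Rightarrow> bool" where
  "max_excess_coeff D p a d0 \<longleftrightarrow> coeff p d0 \<noteq> 0 \<and> D (coeff p d0) = ereal (a + real d0)
     \<and> (\<forall>d. coeff p d \<noteq> 0 \<longrightarrow> D (coeff p d) \<le> ereal (a + real d))
     \<and> (\<forall>d<d0. coeff p d \<noteq> 0 \<longrightarrow> D (coeff p d) < ereal (a + real d))"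

lemma exists_max_excess_coeff:
  fixes p :: "'a::idom poly" and D :: "'a \<Rightarrow> ereal"
  assumes fin: "\<And>x. x \<noteq> 0 \<Longrightarrow> D x \<noteq> \<infinity>" and nz: "coeff p d1 \<noteq> 0"
    and ge: "D (coeff p d1) \<ge> ereal (real d1)"
  obtains a d0 where "a \<ge> 0" "max_excess_coeff D p a d0"
proof -
  define T where "T = {d. coeff p d \<noteq> 0 \<and> D (coeff p d) \<noteq> -\<infinity>}"
  have "T \<subseteq> {..degree p}" unfolding T_def using le_degree by auto
  hence finT: "finite T" by (rule finite_subset) simp
  have d1T: "d1 \<in> T" using nz ge unfolding T_def by auto
  define g where "g d = real_of_ereal (D (coeff p d)) - real d" for d
  have Dg: "D (coeff p d) = ereal (g d + real d)" if "d \<in> T" for d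
    using that fin[of "coeff p d"] by (cases "D (coeff p d)") (auto simp: T_def g_def)
  define a where "a = Max (g ` T)"
  have ga: "g d \<le> a" if "d \<in> T" for d unfolding a_def using finT that by simp
  have "g d1 \<ge> 0" using ge Dg[OF d1T] by simp
  hence a0: "a \<ge> 0" using ga[OF d1T] by simp
  have "a \<in> g ` T" unfolding a_def using finT d1T by (intro Max_in) auto
  hence "\<exists>d. d \<in> T \<and> g d = a" by blast
  then obtain d0 where d0: "d0 \<in> T" "g d0 = a" and least: "\<And>d. d < d0 \<Longrightarrow> \<not> (d \<in> T \<and> g d = a)"
    using exists_least_iff[of "\<lambda>d. d \<in> T \<and> g d = a"] by blast
  have "D (coeff p d) \<le> ereal (a + real d)" if "coeff p d \<noteq> 0" for d
  proof (cases "d \<in> T")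
    case False thus ?thesis using that unfolding T_def by simp
  qed (simp add: Dg ga)
  moreover have "D (coeff p d) < ereal (a + real d)" if "d < d0" "coeff p d \<noteq> 0" for d
  proof (cases "d \<in> T")
    case True
    hence "g d \<noteq> a" using least[OF \<open>d < d0\<close>] by blast
    hence "g d < a" using ga[OF True] by simp
    thus ?thesis using Dg[OF True] by simp
  next
    case False thus ?thesis using that unfolding T_def by simp
  qed
  ultimately have "max_excess_coeff D p a d0"
    using d0 Dg[OF d0(1)] unfolding max_excess_coeff_def T_def by simp
  thus ?thesis using a0 that by blast
qed

text \<open>A Gauss-lemma type computation: in the coefficient of \<open>p * q\<close> at \<open>d0 + e0\<close>, the product of
  the two maximal-excess coefficients strictly dominates all other summands.\<close>
lemma max_excess_coeff_mult:
  assumes D: "semidegree emb D" and emb: "k_algebra emb"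
    and p: "max_excess_coeff D p a d0" and q: "max_excess_coeff D q b e0"
  shows "coeff (p * q) (d0 + e0) \<noteq> 0 \<and> D (coeff (p * q) (d0 + e0)) = ereal (a + b + real (d0 + e0))"
proof -
  have dl: "degree_like emb D" using D unfolding semidegree_def by blast
  define n where "n = d0 + e0"
  define g where "g k = coeff p k * coeff q (n - k)" for k
  have split: "coeff (p * q) n = g d0 + sum g ({..n} - {d0})"
    unfolding coeff_mult g_def[symmetric] by (rule sum.remove) (auto simp: n_def)
  have main_nz: "g d0 \<noteq> 0" using p q by (simp add: g_def n_def max_excess_coeff_def)
  have main: "D (g d0) = ereal (a + b + real n)"
    using semidegree_mult[OF D, of "coeff p d0" "coeff q e0"] p q
    by (simp add: g_def n_def max_excess_coeff_def)
  have "deg_below D (ereal (a + b + real n)) (g k)" if k: "k \<le> n" "k \<noteq> d0" for k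
  proof (cases "coeff p k = 0 \<or> coeff q (n - k) = 0")
    case False
    have rn: "real k + real (n - k) = real n" using k by simp
    have "D (coeff p k) + D (coeff q (n - k)) < ereal ((a + real k) + (b + real (n - k)))"
    proof (cases "k < d0")
      case True thus ?thesis
        using p q False unfolding max_excess_coeff_def by (intro ereal_add_less_le_mono) auto
    next
      case False': False
      hence "n - k < e0" using k unfolding n_def by auto
      hence "D (coeff q (n - k)) + D (coeff p k) < ereal ((b + real (n - k)) + (a + real k))"
        using p q False unfolding max_excess_coeff_def by (intro ereal_add_less_le_mono) auto
      thus ?thesis by (simp add: add.commute)
    qed
    thus ?thesis using semidegree_mult[OF D] False rn
      by (simp add: g_def deg_below_def algebra_simps)
  qed (auto simp: deg_below_def g_def)
  hence "deg_below D (D (g d0)) (sum g ({..n} - {d0}))"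
    unfolding main by (intro deg_below_sum[OF dl]) auto
  thus ?thesis
    using degree_like_add_dominant[OF dl emb main_nz] main split
    unfolding deg_below_def n_def by simp
qed

lemma irreducible_wrt_subset_UN:
  assumes irr: "irreducible_wrt cl Z" and "finite F" and "\<And>i. i \<in> F \<Longrightarrow> cl (C i)"
    and cl_Un: "\<And>A B. cl A \<Longrightarrow> cl B \<Longrightarrow> cl (A \<union> B)" and cl_empty: "cl {}"
    and "Z \<subseteq> (\<Union>i\<in>F. C i)"
  shows "\<exists>i\<in>F. Z \<subseteq> C i"
  using assms(2-3,6)
proof (induction F rule: finite_induct)
  case empty thus ?case using irr unfolding irreducible_wrt_def by auto
next
  case (insert x F)
  have "cl (\<Union>i\<in>F. C i)"
    using insert.hyps(1) insert.prems(1) by (induction F rule: finite_induct) (auto intro: cl_Un cl_empty)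
  hence "Z \<subseteq> C x \<or> Z \<subseteq> (\<Union>i\<in>F. C i)"
    using irr insert.prems unfolding irreducible_wrt_def by auto
  thus ?case using insert by auto
qed

lemma irreducible_components_UN:
  assumes "finite I" and cl: "\<And>i. i \<in> I \<Longrightarrow> cl (Z i)"
    and irr: "\<And>i. i \<in> I \<Longrightarrow> irreducible_wrt cl (Z i)"
    and nested: "\<And>i j. i \<in> I \<Longrightarrow> j \<in> I \<Longrightarrow> Z i \<subseteq> Z j \<Longrightarrow> i = j"
    and "\<And>A B. cl A \<Longrightarrow> cl B \<Longrightarrow> cl (A \<union> B)" and "cl {}"
  shows "irreducible_components cl (\<Union>i\<in>I. Z i) = Z ` I"
proof -
  have cover: "\<exists>i\<in>I. W \<subseteq> Z i" if "irreducible_wrt cl W" "W \<subseteq> (\<Union>i\<in>I. Z i)" for W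
    using irreducible_wrt_subset_UN[OF that(1) assms(1)] cl assms(5,6) that(2) by blast
  show ?thesis
  proof (intro equalityI subsetI)
    fix W assume "W \<in> irreducible_components cl (\<Union>i\<in>I. Z i)"
    hence W: "W \<subseteq> (\<Union>i\<in>I. Z i)" "irreducible_wrt cl W"
      "\<And>W'. W \<subseteq> W' \<Longrightarrow> W' \<subseteq> (\<Union>i\<in>I. Z i) \<Longrightarrow> irreducible_wrt cl W' \<Longrightarrow> W' = W"
      unfolding irreducible_components_def by auto
    then obtain j where j: "j \<in> I" "W \<subseteq> Z j" using cover by blast
    hence "Z j = W" using W(3) irr by auto
    thus "W \<in> Z ` I" using j by blast
  next
    fix W assume "W \<in> Z ` I"
    then obtain i where i: "i \<in> I" "W = Z i" by blast
    have "W' = W" if W': "W \<subseteq> W'" "W' \<subseteq> (\<Union>i\<in>I. Z i)" "irreducible_wrt cl W'" for W'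
    proof -
      obtain j where "j \<in> I" "W' \<subseteq> Z j" using cover[OF W'(3,2)] by blast
      thus ?thesis using nested[OF i(1)] i W'(1) by blast
    qed
    moreover have "W \<subseteq> (\<Union>i\<in>I. Z i)" using i by blast
    ultimately show "W \<in> irreducible_components cl (\<Union>i\<in>I. Z i)"
      unfolding irreducible_components_def using i irr by blast
  qed
qed

section \<open>Homogeneous primes and the Zariski topology on Proj\<close>

context
  fixes R :: "'a::idom poly set" and P :: "'a poly set"
  assumes P: "P \<in> Proj R"
begin

lemma Proj_subset: "P \<subseteq> R"
  and Proj_zero: "0 \<in> P"
  and Proj_add: "p \<in> P \<Longrightarrow> q \<in> P \<Longrightarrow> p + q \<in> P"
  and Proj_mult: "r \<in> R \<Longrightarrow> p \<in> P \<Longrightarrow> r * p \<in> P"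
  and Proj_homogeneous_component: "p \<in> P \<Longrightarrow> monom (coeff p d) d \<in> P"
  and Proj_neq: "P \<noteq> R"
  and Proj_prime: "p \<in> R \<Longrightarrow> q \<in> R \<Longrightarrow> p * q \<in> P \<Longrightarrow> p \<in> P \<or> q \<in> P"
  and Proj_relevant: "\<not> irrelevant R \<subseteq> P"
proof -
  have "hom_ideal R P" and neq: "P \<noteq> R" and prime: "\<forall>p\<in>R. \<forall>q\<in>R. p * q \<in> P \<longrightarrow> p \<in> P \<or> q \<in> P"
    and rel: "\<not> irrelevant R \<subseteq> P"
    using P unfolding Proj_def hom_prime_def by simp_all
  then show "P \<subseteq> R" "0 \<in> P" "p \<in> P \<Longrightarrow> q \<in> P \<Longrightarrow> p + q \<in> P" "r \<in> R \<Longrightarrow> p \<in> P \<Longrightarrow> r * p \<in> P"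
    "p \<in> P \<Longrightarrow> monom (coeff p d) d \<in> P"
    unfolding hom_ideal_def by simp_all
  show "P \<noteq> R" "\<not> irrelevant R \<subseteq> P" by (fact neq, fact rel)
  show "p \<in> R \<Longrightarrow> q \<in> R \<Longrightarrow> p * q \<in> P \<Longrightarrow> p \<in> P \<or> q \<in> P" using prime by blast
qed

lemma Proj_one_notin: "1 \<notin> P"
proof
  assume "1 \<in> P"
  hence "R \<subseteq> P" using Proj_mult[of _ 1] by auto
  thus False using Proj_subset Proj_neq by blast
qed

lemma Proj_sum: "(\<And>k. k \<in> K \<Longrightarrow> g k \<in> P) \<Longrightarrow> sum g K \<in> P"
  by (induction K rule: infinite_finite_induct) (auto intro: Proj_zero Proj_add)

lemma Proj_if_homogeneous_components:
  assumes "\<And>d. monom (coeff q d) d \<in> P" shows "q \<in> P"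
proof -
  have "(\<Sum>d\<le>degree q. monom (coeff q d) d) \<in> P" using assms by (rule Proj_sum)
  thus ?thesis by (simp only: poly_as_sum_of_monoms)
qed

end

definition proj_zero_set :: "'a::idom poly set \<Rightarrow> 'a poly set \<Rightarrow> 'a poly set set" where
  "proj_zero_set R S = {P \<in> Proj R. S \<subseteq> P}"

lemma proj_closed_iff: "proj_closed R Z \<longleftrightarrow> (\<exists>S \<subseteq> R. Z = proj_zero_set R S)"
  unfolding proj_closed_def proj_zero_set_def by blast

lemma proj_closed_empty: "proj_closed R {}"
proof -
  have "proj_zero_set R R = {}"
    unfolding proj_zero_set_def using Proj_subset Proj_neq by (blast intro: subset_antisym)
  thus ?thesis unfolding proj_closed_iff by (intro exI[of _ R]) simp
qed

lemma proj_closed_Un: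
  assumes R_mult: "\<And>p q. p \<in> R \<Longrightarrow> q \<in> R \<Longrightarrow> p * q \<in> R"
    and "proj_closed R A" "proj_closed R B"
  shows "proj_closed R (A \<union> B)"
proof -
  obtain S1 S2 where S: "S1 \<subseteq> R" "A = proj_zero_set R S1" "S2 \<subseteq> R" "B = proj_zero_set R S2"
    using assms(2,3) unfolding proj_closed_iff by blast
  define S where "S = {a * b | a b. a \<in> S1 \<and> b \<in> S2}"
  have "A \<union> B = proj_zero_set R S"
  proof (intro equalityI subsetI)
    fix P assume "P \<in> A \<union> B"
    hence P: "P \<in> Proj R" "S1 \<subseteq> P \<or> S2 \<subseteq> P" using S unfolding proj_zero_set_def by auto
    have "a * b \<in> P" if "a \<in> S1" "b \<in> S2" for a b
      using P Proj_mult[OF P(1), of b a] Proj_mult[OF P(1), of a b] S(1,3) that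
      by (auto simp: mult.commute)
    thus "P \<in> proj_zero_set R S" using P(1) unfolding S_def proj_zero_set_def by blast
  next
    fix P assume "P \<in> proj_zero_set R S"
    hence P: "P \<in> Proj R" "S \<subseteq> P" unfolding proj_zero_set_def by auto
    show "P \<in> A \<union> B"
    proof (rule ccontr)
      assume "P \<notin> A \<union> B"
      then obtain a b where "a \<in> S1" "a \<notin> P" "b \<in> S2" "b \<notin> P"
        using P(1) S unfolding proj_zero_set_def by blast
      moreover have "a * b \<in> P" using P(2) \<open>a \<in> S1\<close> \<open>b \<in> S2\<close> unfolding S_def by blast
      ultimately show False using Proj_prime[OF P(1)] S(1,3) by blast
    qed
  qed
  moreover have "S \<subseteq> R" using S(1,3) R_mult unfolding S_def by blast
  ultimately show ?thesis unfolding proj_closed_iff by blast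
qed

text \<open>The closure of a point is irreducible.\<close>
lemma irreducible_proj_zero_set:
  assumes P: "P \<in> Proj R" shows "irreducible_wrt (proj_closed R) (proj_zero_set R P)"
  unfolding irreducible_wrt_def
proof (intro conjI allI impI)
  show "proj_zero_set R P \<noteq> {}" using P unfolding proj_zero_set_def by blast
  fix C1 C2 assume C: "proj_closed R C1 \<and> proj_closed R C2 \<and> proj_zero_set R P \<subseteq> C1 \<union> C2"
  obtain S1 S2 where S: "C1 = proj_zero_set R S1" "C2 = proj_zero_set R S2"
    using C unfolding proj_closed_iff by blast
  have "P \<in> C1 \<or> P \<in> C2" using C P unfolding proj_zero_set_def by blast
  hence "S1 \<subseteq> P \<or> S2 \<subseteq> P" using S unfolding proj_zero_set_def by blast
  thus "proj_zero_set R P \<subseteq> C1 \<or> proj_zero_set R P \<subseteq> C2"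
    using S unfolding proj_zero_set_def by blast
qed

section \<open>The graded algebra of a degree-like function\<close>

locale filtered_algebra =
  fixes emb :: "'k::field \<Rightarrow> 'a::idom" and \<delta> :: "'a \<Rightarrow> ereal"
  assumes k_algebra: "k_algebra emb" and degree_like: "degree_like emb \<delta>"
begin

abbreviation R :: "'a poly set" where "R \<equiv> Rdelta \<delta>"

abbreviation t :: "'a poly" where "t \<equiv> monom 1 1"

lemma Fdeg_exists: "\<exists>d. f \<in> Fdeg \<delta> d"
proof (cases "f = 0 \<or> \<delta> f = -\<infinity>")
  case False
  then obtain m :: int where m: "\<delta> f = ereal (real_of_int m)"
    using degree_like_int_or_minf[OF degree_like] by blast
  moreover have "real_of_int m \<le> real (nat m)" by simp
  ultimately have "f \<in> Fdeg \<delta> (nat m)" by (simp add: Fdeg_def)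
  thus ?thesis by blast
qed (auto simp: Fdeg_def)

lemma zero_in_Fdeg: "0 \<in> Fdeg \<delta> d"
  by (simp add: Fdeg_def)

lemma one_in_Fdeg: "1 \<in> Fdeg \<delta> d"
  by (simp add: Fdeg_def degree_like_one[OF degree_like k_algebra])

lemma Fdeg_mono: "d \<le> e \<Longrightarrow> f \<in> Fdeg \<delta> d \<Longrightarrow> f \<in> Fdeg \<delta> e"
  unfolding Fdeg_def by (auto intro: order_trans)

lemma Fdeg_add: assumes "f \<in> Fdeg \<delta> d" "g \<in> Fdeg \<delta> d" shows "f + g \<in> Fdeg \<delta> d"
proof (cases "f = 0 \<or> g = 0 \<or> f + g = 0")
  case False
  hence "\<delta> (f + g) \<le> max (\<delta> f) (\<delta> g)" using degree_like_add_le[OF degree_like] by blast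
  also have "\<dots> \<le> ereal (real d)" using assms False by (simp add: Fdeg_def)
  finally show ?thesis by (simp add: Fdeg_def)
qed (use assms in \<open>auto simp: Fdeg_def\<close>)

lemma Fdeg_minus: "f \<in> Fdeg \<delta> d \<Longrightarrow> - f \<in> Fdeg \<delta> d"
  using degree_like_minus[OF degree_like k_algebra, of f] unfolding Fdeg_def by (cases "f = 0") auto

lemma Fdeg_sum: "(\<And>k. k \<in> K \<Longrightarrow> g k \<in> Fdeg \<delta> d) \<Longrightarrow> sum g K \<in> Fdeg \<delta> d"
  by (induction K rule: infinite_finite_induct) (auto intro: zero_in_Fdeg Fdeg_add)

lemma Fdeg_mult: assumes "f \<in> Fdeg \<delta> d" "g \<in> Fdeg \<delta> e" shows "f * g \<in> Fdeg \<delta> (d + e)"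
proof (cases "f = 0 \<or> g = 0")
  case False
  hence "\<delta> (f * g) \<le> \<delta> f + \<delta> g" using degree_like_mult_le[OF degree_like] by blast
  also have "\<dots> \<le> ereal (real d + real e)"
    using assms False by (intro ereal_add_le_mono) (auto simp: Fdeg_def)
  finally show ?thesis by (simp add: Fdeg_def)
qed (auto simp: Fdeg_def)

lemma coeff_in_Fdeg: "p \<in> R \<Longrightarrow> coeff p d \<in> Fdeg \<delta> d"
  by (simp add: Rdelta_def)

lemma monom_in_R_iff: "monom f d \<in> R \<longleftrightarrow> f \<in> Fdeg \<delta> d"
  unfolding Rdelta_def by (auto simp: zero_in_Fdeg)

lemma zero_in_R: "0 \<in> R"
  by (simp add: Rdelta_def zero_in_Fdeg)

lemma one_in_R: "1 \<in> R"
  using monom_in_R_iff[of 1 0] by (simp add: one_in_Fdeg)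

lemma t_in_R: "t \<in> R"
  by (simp add: monom_in_R_iff one_in_Fdeg)

lemma R_add: "p \<in> R \<Longrightarrow> q \<in> R \<Longrightarrow> p + q \<in> R"
  by (simp add: Rdelta_def Fdeg_add)

lemma R_minus: "p \<in> R \<Longrightarrow> - p \<in> R"
  by (simp add: Rdelta_def Fdeg_minus)

lemma R_mult: assumes "p \<in> R" "q \<in> R" shows "p * q \<in> R"
proof -
  have "coeff p i * coeff q (n - i) \<in> Fdeg \<delta> n" if "i \<le> n" for i n
    using Fdeg_mult[OF coeff_in_Fdeg[OF assms(1)] coeff_in_Fdeg[OF assms(2)], of i "n - i"] that
    by simp
  hence "coeff (p * q) n \<in> Fdeg \<delta> n" for n
    unfolding coeff_mult by (intro Fdeg_sum) simp
  thus ?thesis by (simp add: Rdelta_def)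
qed

text \<open>The dehomogenization of a homogeneous prime \<open>P\<close>, i.e. the prime \<open>P\<close> of \<open>A\<^sup>\<delta>\<close> localized at
  \<open>t\<close>, in degree zero.\<close>
definition dehom :: "'a poly set \<Rightarrow> 'a set" where
  "dehom P = {f. \<exists>d. f \<in> Fdeg \<delta> d \<and> monom f d \<in> P}"

context
  fixes P assumes P: "P \<in> Proj R" and t_notin: "t \<notin> P"
begin

lemma monom_in_Proj_shift:
  assumes "f \<in> Fdeg \<delta> d" shows "monom f (d + k) \<in> P \<longleftrightarrow> monom f d \<in> P"
proof (induction k)
  case (Suc k)
  have "monom f (d + k) \<in> R" using Fdeg_mono[OF _ assms] by (simp add: monom_in_R_iff)
  moreover have "monom f (d + Suc k) = t * monom f (d + k)" by (simp add: mult_monom)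
  ultimately show ?case using Suc Proj_prime[OF P t_in_R] Proj_mult[OF P t_in_R] t_notin by auto
qed simp

lemma dehom_iff:
  assumes "f \<in> Fdeg \<delta> d" shows "f \<in> dehom P \<longleftrightarrow> monom f d \<in> P"
proof -
  have "monom f e \<in> P \<longleftrightarrow> monom f d \<in> P" if "f \<in> Fdeg \<delta> e" for e
  proof (cases "d \<le> e")
    case True thus ?thesis using monom_in_Proj_shift[OF assms, of "e - d"] by simp
  next
    case False thus ?thesis using monom_in_Proj_shift[OF that, of "d - e"] by simp
  qed
  thus ?thesis using assms unfolding dehom_def by blast
qed

lemma prime_ideal_dehom: "prime_ideal (dehom P)"
  unfolding prime_ideal_def
proof (intro conjI ballI allI impI)
  show "0 \<in> dehom P" using dehom_iff[OF zero_in_Fdeg, of 0] Proj_zero[OF P] by simp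
next
  fix a b assume "a \<in> dehom P" "b \<in> dehom P"
  then obtain da db where "a \<in> Fdeg \<delta> da" "b \<in> Fdeg \<delta> db" unfolding dehom_def by blast
  hence ab: "a \<in> Fdeg \<delta> (max da db)" "b \<in> Fdeg \<delta> (max da db)"
    by (auto intro: Fdeg_mono[OF max.cobounded1] Fdeg_mono[OF max.cobounded2])
  hence "monom a (max da db) + monom b (max da db) \<in> P"
    using \<open>a \<in> dehom P\<close> \<open>b \<in> dehom P\<close> dehom_iff Proj_add[OF P] by blast
  thus "a + b \<in> dehom P" using dehom_iff[OF Fdeg_add[OF ab]] by (simp add: add_monom)
next
  fix r a assume "a \<in> dehom P"
  then obtain d where d: "a \<in> Fdeg \<delta> d" unfolding dehom_def by blast
  obtain e where e: "r \<in> Fdeg \<delta> e" using Fdeg_exists by blast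
  have "monom r e * monom a d \<in> P"
    using Proj_mult[OF P] e d \<open>a \<in> dehom P\<close> dehom_iff monom_in_R_iff by blast
  thus "r * a \<in> dehom P" using dehom_iff[OF Fdeg_mult[OF e d]] by (simp add: mult_monom)
next
  show "dehom P \<noteq> UNIV"
    using dehom_iff[OF one_in_Fdeg, of 0] Proj_one_notin[OF P] by auto
next
  fix a b assume "a * b \<in> dehom P"
  obtain d e where d: "a \<in> Fdeg \<delta> d" and e: "b \<in> Fdeg \<delta> e" using Fdeg_exists by blast
  have "monom a d * monom b e \<in> P"
    using dehom_iff[OF Fdeg_mult[OF d e]] \<open>a * b \<in> dehom P\<close> by (simp add: mult_monom)
  hence "monom a d \<in> P \<or> monom b e \<in> P" using Proj_prime[OF P] d e monom_in_R_iff by blast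
  thus "a \<in> dehom P \<or> b \<in> dehom P" using dehom_iff d e by blast
qed

lemma spec_to_proj_dehom: "spec_to_proj \<delta> (dehom P) = P"
proof (intro equalityI subsetI)
  fix q assume "q \<in> spec_to_proj \<delta> (dehom P)"
  hence "q \<in> R" "\<And>d. coeff q d \<in> dehom P" unfolding spec_to_proj_def by auto
  thus "q \<in> P" using Proj_if_homogeneous_components[OF P] dehom_iff coeff_in_Fdeg by blast
next
  fix q assume "q \<in> P"
  hence "q \<in> R" using Proj_subset[OF P] by blast
  thus "q \<in> spec_to_proj \<delta> (dehom P)"
    using dehom_iff coeff_in_Fdeg Proj_homogeneous_component[OF P \<open>q \<in> P\<close>]
    unfolding spec_to_proj_def by blast
qed

end

lemma X_infinity_eq: "X_infinity \<delta> = {P \<in> Proj R. t \<in> P}"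
proof -
  have "P \<notin> spec_to_proj \<delta> ` Spec" if "t \<in> P" for P
  proof
    assume "P \<in> spec_to_proj \<delta> ` Spec"
    then obtain p where p: "prime_ideal p" "P = spec_to_proj \<delta> p" by (auto simp: Spec_def)
    hence "coeff t 1 \<in> p" using \<open>t \<in> P\<close> unfolding spec_to_proj_def by blast
    moreover have "\<forall>r. \<forall>a\<in>p. r * a \<in> p" "p \<noteq> UNIV" using p(1) unfolding prime_ideal_def by blast+
    ultimately show False by (metis UNIV_eq_I coeff_monom mult.right_neutral)
  qed
  moreover have "P \<in> spec_to_proj \<delta> ` Spec" if "P \<in> Proj R" "t \<notin> P" for P
    using spec_to_proj_dehom[OF that] prime_ideal_dehom[OF that] unfolding Spec_def by (metis imageI mem_Collect_eq)
  ultimately show ?thesis unfolding X_infinity_def by blast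
qed

subsection \<open>The homogeneous prime attached to a dominated semidegree\<close>

definition semidegree_ideal :: "('a \<Rightarrow> ereal) \<Rightarrow> 'a poly set" where
  "semidegree_ideal \<sigma> = {q \<in> R. \<forall>d. deg_below \<sigma> (ereal (real d)) (coeff q d)}"

lemma semidegree_ideal_subset: "semidegree_ideal \<sigma> \<subseteq> R"
  unfolding semidegree_ideal_def by blast

lemma monom_in_semidegree_ideal_iff:
  "f \<in> Fdeg \<delta> d \<Longrightarrow> monom f d \<in> semidegree_ideal \<sigma> \<longleftrightarrow> deg_below \<sigma> (ereal (real d)) f"
  unfolding semidegree_ideal_def by (auto simp: monom_in_R_iff deg_below_def)

lemma irrelevant_subset_semidegree_ideal:
  assumes "\<And>f. f \<noteq> 0 \<Longrightarrow> \<sigma> f = 0" shows "irrelevant R \<subseteq> semidegree_ideal \<sigma>"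
proof
  fix q assume "q \<in> irrelevant R"
  hence "q \<in> R" "coeff q 0 = 0" unfolding irrelevant_def by auto
  moreover have "deg_below \<sigma> (ereal (real d)) (coeff q d)" for d
  proof (cases "coeff q d = 0")
    case False
    hence "d \<noteq> 0" using \<open>coeff q 0 = 0\<close> by (cases "d = 0") auto
    thus ?thesis using assms[OF False] by (simp add: deg_below_def zero_ereal_def)
  qed (simp add: deg_below_def)
  ultimately show "q \<in> semidegree_ideal \<sigma>" unfolding semidegree_ideal_def by blast
qed

context
  fixes \<sigma> :: "'a \<Rightarrow> ereal"
  assumes semidegree: "semidegree emb \<sigma>" and dominated: "\<And>f. f \<noteq> 0 \<Longrightarrow> \<sigma> f \<le> \<delta> f"
begin

lemma degree_like_semidegree: "degree_like emb \<sigma>"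
  using semidegree unfolding semidegree_def by blast

lemma semidegree_ideal_hom_ideal: "hom_ideal R (semidegree_ideal \<sigma>)"
  unfolding hom_ideal_def
proof (intro conjI ballI allI)
  show "semidegree_ideal \<sigma> \<subseteq> R" by (rule semidegree_ideal_subset)
  show "0 \<in> semidegree_ideal \<sigma>" unfolding semidegree_ideal_def by (simp add: zero_in_R deg_below_def)
next
  fix p q assume "p \<in> semidegree_ideal \<sigma>" "q \<in> semidegree_ideal \<sigma>"
  thus "p + q \<in> semidegree_ideal \<sigma>"
    unfolding semidegree_ideal_def using R_add deg_below_add[OF degree_like_semidegree] by auto
next
  fix p assume "p \<in> semidegree_ideal \<sigma>"
  thus "- p \<in> semidegree_ideal \<sigma>"
    unfolding semidegree_ideal_def using R_minus deg_below_minus[OF degree_like_semidegree k_algebra]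
    by auto
next
  fix p d assume "p \<in> semidegree_ideal \<sigma>"
  thus "monom (coeff p d) d \<in> semidegree_ideal \<sigma>"
    using monom_in_semidegree_ideal_iff coeff_in_Fdeg unfolding semidegree_ideal_def by blast
next
  fix r p assume r: "r \<in> R" and p: "p \<in> semidegree_ideal \<sigma>"
  have "deg_below \<sigma> (ereal (real n)) (coeff r k * coeff p (n - k))" if "k \<le> n" for k n
  proof (cases "coeff r k = 0 \<or> coeff p (n - k) = 0")
    case False
    have "\<sigma> (coeff r k) \<le> ereal (real k)"
      using dominated[of "coeff r k"] coeff_in_Fdeg[OF r, of k] False unfolding Fdeg_def by auto
    moreover have "\<sigma> (coeff p (n - k)) < ereal (real (n - k))"
      using p False unfolding semidegree_ideal_def deg_below_def by blast
    ultimately have "\<sigma> (coeff p (n - k)) + \<sigma> (coeff r k) < ereal (real (n - k) + real k)"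
      by (intro ereal_add_less_le_mono)
    thus ?thesis using semidegree_mult[OF semidegree] False \<open>k \<le> n\<close> by (simp add: deg_below_def add.commute)
  qed (auto simp: deg_below_def)
  hence "deg_below \<sigma> (ereal (real n)) (coeff (r * p) n)" for n
    unfolding coeff_mult by (intro deg_below_sum[OF degree_like_semidegree]) auto
  thus "r * p \<in> semidegree_ideal \<sigma>"
    using R_mult[OF r] p semidegree_ideal_subset unfolding semidegree_ideal_def by blast
qed

lemma semidegree_ideal_mult_notin:
  assumes "p \<in> R" "q \<in> R" "p \<notin> semidegree_ideal \<sigma>" "q \<notin> semidegree_ideal \<sigma>"
  shows "p * q \<notin> semidegree_ideal \<sigma>"
proof -
  have "\<exists>a d0. a \<ge> 0 \<and> max_excess_coeff \<sigma> p a d0" if "p \<in> R" "p \<notin> semidegree_ideal \<sigma>" for p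
  proof -
    have "\<exists>d. \<not> deg_below \<sigma> (ereal (real d)) (coeff p d)"
      using that unfolding semidegree_ideal_def by blast
    then obtain d where "coeff p d \<noteq> 0" "\<sigma> (coeff p d) \<ge> ereal (real d)"
      unfolding deg_below_def by (auto simp: not_less)
    thus ?thesis
      using exists_max_excess_coeff degree_like_not_infinity[OF degree_like_semidegree] by metis
  qed
  then obtain a d0 b e0 where "a \<ge> 0" "max_excess_coeff \<sigma> p a d0" "b \<ge> 0" "max_excess_coeff \<sigma> q b e0"
    using assms by meson
  hence "coeff (p * q) (d0 + e0) \<noteq> 0" "\<sigma> (coeff (p * q) (d0 + e0)) \<ge> ereal (real (d0 + e0))"
    using max_excess_coeff_mult[OF semidegree k_algebra] by auto
  thus ?thesis unfolding semidegree_ideal_def deg_below_def by (auto simp: not_less)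
qed

lemma one_notin_semidegree_ideal: "1 \<notin> semidegree_ideal \<sigma>"
  using degree_like_one[OF degree_like_semidegree k_algebra]
  unfolding semidegree_ideal_def deg_below_def by auto

lemma t_in_semidegree_ideal: "t \<in> semidegree_ideal \<sigma>"
  using monom_in_semidegree_ideal_iff[OF one_in_Fdeg]
    degree_like_one[OF degree_like_semidegree k_algebra] by (simp add: deg_below_def)

lemma semidegree_ideal_in_Proj:
  assumes "f \<noteq> 0" "f \<in> Fdeg \<delta> d" "d \<ge> 1" "\<sigma> f \<ge> ereal (real d)"
  shows "semidegree_ideal \<sigma> \<in> Proj R"
proof -
  have "monom f d \<in> irrelevant R" "monom f d \<notin> semidegree_ideal \<sigma>"
    using assms monom_in_semidegree_ideal_iff
    by (auto simp: irrelevant_def monom_in_R_iff deg_below_def not_less)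
  moreover have "semidegree_ideal \<sigma> \<noteq> R" using one_notin_semidegree_ideal one_in_R by blast
  ultimately show ?thesis
    using semidegree_ideal_hom_ideal semidegree_ideal_mult_notin
    unfolding Proj_def hom_prime_def by blast
qed

end

lemma exists_monom_notin_Proj:
  assumes P: "P \<in> Proj R" and "\<not> semidegree_ideal \<sigma> \<subseteq> P"
  obtains f d where "f \<in> Fdeg \<delta> d" "f \<noteq> 0" "monom f d \<notin> P" "\<sigma> f < ereal (real d)"
proof -
  obtain q where q: "q \<in> semidegree_ideal \<sigma>" "q \<notin> P" using assms(2) by blast
  then obtain d where d: "monom (coeff q d) d \<notin> P"
    using Proj_if_homogeneous_components[OF P] by blast
  hence "coeff q d \<noteq> 0" using Proj_zero[OF P] by auto
  moreover have "deg_below \<sigma> (ereal (real d)) (coeff q d)" "q \<in> R"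
    using q(1) unfolding semidegree_ideal_def by auto
  ultimately show ?thesis using that d coeff_in_Fdeg unfolding deg_below_def by blast
qed

end

locale subdegree_algebra =
  fixes emb :: "'k::field \<Rightarrow> 'a::idom" and \<delta> :: "'a \<Rightarrow> ereal"
    and \<delta>s :: "nat \<Rightarrow> 'a \<Rightarrow> ereal" and N :: nat
  assumes algebra: "k_algebra emb" and nonneg: "nonneg_on_nonzero \<delta>"
    and presentation: "subdegree_presentation emb \<delta> N \<delta>s" and minimal: "minimal_presentation N \<delta>s"
begin

sublocale filtered_algebra emb \<delta>
  using algebra presentation unfolding subdegree_presentation_def by unfold_locales blast+

lemma semidegree_\<delta>s: "i < N \<Longrightarrow> semidegree emb (\<delta>s i)"
  using presentation unfolding subdegree_presentation_def by blast

lemma degree_like_\<delta>s: "i < N \<Longrightarrow> degree_like emb (\<delta>s i)"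
  using semidegree_\<delta>s unfolding semidegree_def by blast

lemma \<delta>_eq_Max: "f \<noteq> 0 \<Longrightarrow> \<delta> f = Max ((\<lambda>i. \<delta>s i f) ` {..<N})"
  using presentation unfolding subdegree_presentation_def by blast

lemma \<delta>s_le_\<delta>: "i < N \<Longrightarrow> f \<noteq> 0 \<Longrightarrow> \<delta>s i f \<le> \<delta> f"
  using \<delta>_eq_Max by simp

lemma \<delta>_less_if_\<delta>s_less:
  assumes "f \<noteq> 0" "\<And>i. i < N \<Longrightarrow> \<delta>s i f < c" shows "\<delta> f < c"
proof -
  have "N \<ge> 1" using presentation unfolding subdegree_presentation_def by blast
  hence "(\<lambda>i. \<delta>s i f) ` {..<N} \<noteq> {}" by (simp add: lessThan_empty_iff)
  thus ?thesis using \<delta>_eq_Max[OF assms(1)] assms(2) by (simp add: Max_less_iff)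
qed

lemma \<delta>_eq_dominant_\<delta>s:
  "i < N \<Longrightarrow> f \<noteq> 0 \<Longrightarrow> (\<And>j. j < N \<Longrightarrow> j \<noteq> i \<Longrightarrow> \<delta>s j f < \<delta>s i f) \<Longrightarrow> \<delta> f = \<delta>s i f"
  unfolding \<delta>_eq_Max by (intro Max_eqI) (auto simp: le_less)

lemma exists_dominant_\<delta>s:
  assumes "i < N" obtains f where "f \<noteq> 0" "\<And>j. j < N \<Longrightarrow> j \<noteq> i \<Longrightarrow> \<delta>s j f < \<delta>s i f"
  using minimal assms unfolding minimal_presentation_def by blast

lemma \<delta>_nat_valued:
  assumes "f \<noteq> 0" obtains d :: nat where "\<delta> f = ereal (real d)"
proof -
  have "\<delta> f \<ge> 0" using nonneg assms unfolding nonneg_on_nonzero_def by blast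
  then obtain m :: int where "\<delta> f = ereal (real_of_int m)" "m \<ge> 0"
    using degree_like_int_or_minf[OF degree_like assms] by auto
  thus ?thesis using that[of "nat m"] by simp
qed

lemma \<delta>s_negative_le_minus_1:
  assumes "i < N" "f \<noteq> 0" "\<delta>s i f < 0" shows "\<delta>s i f \<le> -1"
proof (cases "\<delta>s i f = -\<infinity>")
  case False
  then obtain m :: int where "\<delta>s i f = ereal (real_of_int m)"
    using degree_like_int_or_minf[OF degree_like_\<delta>s[OF assms(1)] assms(2)] by blast
  moreover have "m \<le> -1" using calculation assms(3) by (simp add: zero_ereal_def)
  ultimately show ?thesis by (simp add: one_ereal_def)
qed simp

lemma exists_power_mult_below:
  assumes i: "i < N" and u: "u \<noteq> 0" "\<delta>s i u = 0" "\<And>j. j < N \<Longrightarrow> j \<noteq> i \<Longrightarrow> \<delta>s j u \<le> -1"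
    and h: "h \<noteq> 0"
  obtains n where "\<delta>s i (h * u ^ n) = \<delta>s i h" "\<And>j. j < N \<Longrightarrow> j \<noteq> i \<Longrightarrow> \<delta>s j (h * u ^ n) < ereal c"
proof -
  have "\<forall>\<^sub>F n in sequentially. \<forall>j\<in>{j. j < N \<and> j \<noteq> i}. \<delta>s j h + ereal (- real n) < ereal c"
    using degree_like_not_infinity[OF degree_like_\<delta>s h]
    by (intro eventually_ball_finite ballI eventually_ereal_add_minus_less) auto
  then obtain n where n: "\<And>j. j < N \<Longrightarrow> j \<noteq> i \<Longrightarrow> \<delta>s j h + ereal (- real n) < ereal c"
    unfolding eventually_sequentially by blast
  have un: "u ^ n \<noteq> 0" using u(1) by simp
  show ?thesis
  proof
    show "\<delta>s i (h * u ^ n) = \<delta>s i h"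
      using semidegree_mult[OF semidegree_\<delta>s[OF i] h un]
        semidegree_power_eq_0[OF semidegree_\<delta>s[OF i] algebra u(1,2)] by simp
    fix j assume j: "j < N" "j \<noteq> i"
    have "\<delta>s j (h * u ^ n) = \<delta>s j h + \<delta>s j (u ^ n)"
      using semidegree_mult[OF semidegree_\<delta>s[OF j(1)] h un] .
    also have "\<dots> \<le> \<delta>s j h + ereal (- real n)"
      using semidegree_power_le[OF semidegree_\<delta>s[OF j(1)] algebra u(1), of "-1" n] u(3)[OF j]
      by (intro add_left_mono) (simp add: one_ereal_def)
    also have "\<dots> < ereal c" using n[OF j] .
    finally show "\<delta>s j (h * u ^ n) < ereal c" .
  qed
qed

text \<open>Start from some \<open>u\<close> on which \<open>\<delta>s i\<close> strictly dominates. If \<open>\<delta>s i u = 0\<close>, multiply \<open>f0\<close> by a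
  high power of \<open>u\<close>; nonnegativity of \<open>\<delta>\<close> excludes \<open>\<delta>s i f0 < 0\<close>.\<close>
lemma exists_\<delta>s_dominant_positive:
  assumes i: "i < N" and f0: "f0 \<noteq> 0" "\<delta>s i f0 \<noteq> 0"
  obtains f and d :: nat where "f \<noteq> 0" "d \<ge> 1" "\<delta> f = ereal (real d)" "\<delta>s i f = ereal (real d)"
proof -
  obtain u where u: "u \<noteq> 0" "\<And>j. j < N \<Longrightarrow> j \<noteq> i \<Longrightarrow> \<delta>s j u < \<delta>s i u"
    using exists_dominant_\<delta>s[OF i] by blast
  have du: "\<delta> u = \<delta>s i u" using \<delta>_eq_dominant_\<delta>s[OF i u] .
  obtain m :: nat where m: "\<delta> u = ereal (real m)" using \<delta>_nat_valued[OF u(1)] .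
  show ?thesis
  proof (cases "m \<ge> 1")
    case True thus ?thesis using that u(1) du m by metis
  next
    case False
    hence "m = 0" by simp
    hence ui: "\<delta>s i u = 0" using du m by (simp add: zero_ereal_def)
    have uj: "\<delta>s j u \<le> -1" if "j < N" "j \<noteq> i" for j
      using \<delta>s_negative_le_minus_1[OF that(1) u(1)] u(2)[OF that] ui by simp
    show ?thesis
    proof (cases "\<delta>s i f0 > 0")
      case True
      then obtain c where c: "\<delta>s i f0 = ereal c"
        using degree_like_not_infinity[OF degree_like_\<delta>s[OF i] f0(1)] by (cases "\<delta>s i f0") auto
      obtain n where n: "\<delta>s i (f0 * u ^ n) = \<delta>s i f0"
        "\<And>j. j < N \<Longrightarrow> j \<noteq> i \<Longrightarrow> \<delta>s j (f0 * u ^ n) < ereal c"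
        using exists_power_mult_below[OF i u(1) ui uj f0(1)] by blast
      have f: "f0 * u ^ n \<noteq> 0" using f0(1) u(1) by simp
      have \<delta>f: "\<delta> (f0 * u ^ n) = \<delta>s i f0" using \<delta>_eq_dominant_\<delta>s[OF i f] n c by simp
      obtain d :: nat where d: "\<delta> (f0 * u ^ n) = ereal (real d)" using \<delta>_nat_valued[OF f] .
      have "d \<ge> 1" using d \<delta>f True by (simp add: zero_ereal_def)
      thus ?thesis using that f d \<delta>f n(1) by metis
    next
      case False
      hence neg: "\<delta>s i f0 < 0" using f0(2) by (simp add: not_less le_less)
      obtain n where n: "\<delta>s i (f0 * u ^ n) = \<delta>s i f0"
        "\<And>j. j < N \<Longrightarrow> j \<noteq> i \<Longrightarrow> \<delta>s j (f0 * u ^ n) < ereal 0"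
        using exists_power_mult_below[OF i u(1) ui uj f0(1)] by blast
      have f: "f0 * u ^ n \<noteq> 0" using f0(1) u(1) by simp
      have "\<delta> (f0 * u ^ n) < 0"
        using \<delta>_less_if_\<delta>s_less[OF f] n neg by (metis zero_ereal_def)
      moreover obtain d :: nat where "\<delta> (f0 * u ^ n) = ereal (real d)" using \<delta>_nat_valued[OF f] .
      ultimately show ?thesis by (simp add: zero_ereal_def)
    qed
  qed
qed

subsection \<open>The components at infinity\<close>

definition active_indices :: "nat set" where
  "active_indices = {i. i < N \<and> (\<exists>f. f \<noteq> 0 \<and> \<delta>s i f \<noteq> 0)}"

lemma semidegree_ideal_active_in_Proj:
  assumes "i \<in> active_indices" shows "semidegree_ideal (\<delta>s i) \<in> Proj R"
proof -
  obtain f0 where i: "i < N" "f0 \<noteq> 0" "\<delta>s i f0 \<noteq> 0" using assms unfolding active_indices_def by blast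
  obtain f d where f: "f \<noteq> 0" "d \<ge> 1" "\<delta> f = ereal (real d)" "\<delta>s i f = ereal (real d)"
    using exists_\<delta>s_dominant_positive[OF i] .
  hence "f \<in> Fdeg \<delta> d" by (simp add: Fdeg_def)
  thus ?thesis
    using semidegree_ideal_in_Proj[OF semidegree_\<delta>s[OF i(1)] \<delta>s_le_\<delta>[OF i(1)] f(1) _ f(2)] f(4)
    by simp
qed

lemma exists_monom_notin_below:
  assumes P: "P \<in> Proj R" and notin: "\<And>i. i < N \<Longrightarrow> \<not> semidegree_ideal (\<delta>s i) \<subseteq> P"
  shows "k \<le> N \<Longrightarrow> \<exists>F D. F \<in> Fdeg \<delta> D \<and> F \<noteq> 0 \<and> monom F D \<notin> P \<and> (\<forall>j<k. \<delta>s j F < ereal (real D))"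
proof (induction k)
  case 0
  show ?case using one_in_Fdeg Proj_one_notin[OF P] by (intro exI[of _ 1] exI[of _ 0]) auto
next
  case (Suc k)
  then obtain F D where F: "F \<in> Fdeg \<delta> D" "F \<noteq> 0" "monom F D \<notin> P" "\<forall>j<k. \<delta>s j F < ereal (real D)"
    by auto
  have k: "k < N" using Suc.prems by simp
  obtain f d where f: "f \<in> Fdeg \<delta> d" "f \<noteq> 0" "monom f d \<notin> P" "\<delta>s k f < ereal (real d)"
    using exists_monom_notin_Proj[OF P notin[OF k]] .
  have "monom F D \<in> R" "monom f d \<in> R" using F(1) f(1) by (simp_all add: monom_in_R_iff)
  hence "monom F D * monom f d \<notin> P" using Proj_prime[OF P] F(3) f(3) by blast
  hence "monom (F * f) (D + d) \<notin> P" by (simp add: mult_monom)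
  moreover have "\<delta>s j (F * f) < ereal (real (D + d))" if "j < Suc k" for j
  proof -
    have j: "j < N" using that k by simp
    have le: "\<delta>s j F \<le> ereal (real D)" "\<delta>s j f \<le> ereal (real d)"
      using \<delta>s_le_\<delta>[OF j] F(1,2) f(1,2) unfolding Fdeg_def by (auto intro: order_trans)
    have "\<delta>s j F + \<delta>s j f < ereal (real D + real d)"
    proof (cases "j < k")
      case True thus ?thesis using F(4) le(2) by (intro ereal_add_less_le_mono) auto
    next
      case False
      hence "j = k" using that by simp
      hence "\<delta>s j f + \<delta>s j F < ereal (real d + real D)"
        using f(4) le(1) by (intro ereal_add_less_le_mono) auto
      thus ?thesis by (simp add: add.commute)
    qed
    thus ?thesis using semidegree_mult[OF semidegree_\<delta>s[OF j] F(2) f(2)] by simp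
  qed
  moreover have "F * f \<noteq> 0" using F(2) f(2) by simp
  ultimately show ?case using Fdeg_mult[OF F(1) f(1)] by blast
qed

text \<open>If \<open>P\<close> contained none of the semidegree ideals, the previous lemma would give some
  \<open>(F)\<^sub>D \<notin> P\<close> with \<open>\<delta> F < D\<close>; but then \<open>(F)\<^sub>D = t (F)\<^sub>D\<^sub>-\<^sub>1 \<in> P\<close>.\<close>
lemma Proj_contains_semidegree_ideal:
  assumes P: "P \<in> Proj R" and t: "t \<in> P"
  obtains i where "i < N" "semidegree_ideal (\<delta>s i) \<subseteq> P"
proof (rule ccontr)
  assume "\<not> thesis"
  hence "\<And>i. i < N \<Longrightarrow> \<not> semidegree_ideal (\<delta>s i) \<subseteq> P" using that by blast
  then obtain F D where F: "F \<noteq> 0" "monom F D \<notin> P" "\<And>j. j < N \<Longrightarrow> \<delta>s j F < ereal (real D)"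
    using exists_monom_notin_below[OF P, of N] by blast
  obtain e :: nat where e: "\<delta> F = ereal (real e)" using \<delta>_nat_valued[OF F(1)] .
  have "e < D" using \<delta>_less_if_\<delta>s_less[OF F(1) F(3)] e by simp
  hence "monom F (D - 1) \<in> R" "monom F D = monom F (D - 1) * t"
    using e by (auto simp: monom_in_R_iff Fdeg_def mult_monom)
  thus False using Proj_mult[OF P _ t] F(2) by simp
qed

lemma X_infinity_eq_UN:
  "X_infinity \<delta> = (\<Union>i\<in>active_indices. proj_zero_set R (semidegree_ideal (\<delta>s i)))"
proof (intro equalityI subsetI)
  fix P assume "P \<in> X_infinity \<delta>"
  hence P: "P \<in> Proj R" "t \<in> P" using X_infinity_eq by auto
  then obtain i where i: "i < N" "semidegree_ideal (\<delta>s i) \<subseteq> P"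
    using Proj_contains_semidegree_ideal by blast
  have "\<not> irrelevant R \<subseteq> semidegree_ideal (\<delta>s i)" using Proj_relevant[OF P(1)] i(2) by blast
  hence "i \<in> active_indices"
    using i(1) irrelevant_subset_semidegree_ideal[of "\<delta>s i"] unfolding active_indices_def by blast
  moreover have "P \<in> proj_zero_set R (semidegree_ideal (\<delta>s i))"
    using P(1) i(2) unfolding proj_zero_set_def by blast
  ultimately show "P \<in> (\<Union>i\<in>active_indices. proj_zero_set R (semidegree_ideal (\<delta>s i)))" by blast
next
  fix P assume "P \<in> (\<Union>i\<in>active_indices. proj_zero_set R (semidegree_ideal (\<delta>s i)))"
  then obtain i where "i < N" "P \<in> Proj R" "semidegree_ideal (\<delta>s i) \<subseteq> P"
    unfolding proj_zero_set_def active_indices_def by blast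
  moreover have "t \<in> semidegree_ideal (\<delta>s i)"
    using t_in_semidegree_ideal[OF semidegree_\<delta>s[OF \<open>i < N\<close>] \<delta>s_le_\<delta>[OF \<open>i < N\<close>]] .
  ultimately show "P \<in> X_infinity \<delta>" using X_infinity_eq by blast
qed

lemma semidegree_ideal_not_subset:
  assumes "i < N" "j < N" "i \<noteq> j" shows "\<not> semidegree_ideal (\<delta>s j) \<subseteq> semidegree_ideal (\<delta>s i)"
proof -
  obtain f where f: "f \<noteq> 0" "\<And>k. k < N \<Longrightarrow> k \<noteq> i \<Longrightarrow> \<delta>s k f < \<delta>s i f"
    using exists_dominant_\<delta>s[OF assms(1)] by blast
  obtain d :: nat where d: "\<delta> f = ereal (real d)" using \<delta>_nat_valued[OF f(1)] .
  have \<delta>f: "\<delta> f = \<delta>s i f" using \<delta>_eq_dominant_\<delta>s[OF assms(1) f] .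
  have "f \<in> Fdeg \<delta> d" using d by (simp add: Fdeg_def)
  hence "monom f d \<in> semidegree_ideal (\<delta>s j)" "monom f d \<notin> semidegree_ideal (\<delta>s i)"
    using monom_in_semidegree_ideal_iff f(2)[OF assms(2)] assms(3) \<delta>f d f(1)
    by (auto simp: deg_below_def)
  thus ?thesis by blast
qed

lemma proj_zero_set_semidegree_ideal_subset_iff:
  assumes "i \<in> active_indices" "j \<in> active_indices"
  shows "proj_zero_set R (semidegree_ideal (\<delta>s i)) \<subseteq> proj_zero_set R (semidegree_ideal (\<delta>s j))
    \<longleftrightarrow> i = j"
proof
  assume "proj_zero_set R (semidegree_ideal (\<delta>s i)) \<subseteq> proj_zero_set R (semidegree_ideal (\<delta>s j))"
  moreover have "semidegree_ideal (\<delta>s i) \<in> proj_zero_set R (semidegree_ideal (\<delta>s i))"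
    using semidegree_ideal_active_in_Proj[OF assms(1)] unfolding proj_zero_set_def by blast
  ultimately have "semidegree_ideal (\<delta>s j) \<subseteq> semidegree_ideal (\<delta>s i)"
    unfolding proj_zero_set_def by blast
  thus "i = j" using semidegree_ideal_not_subset assms unfolding active_indices_def by blast
qed simp

text \<open>By minimality at most one \<open>\<delta>s i\<close> vanishes identically.\<close>
lemma card_active_indices:
  "card active_indices = (if \<exists>i<N. \<forall>f. f \<noteq> 0 \<longrightarrow> \<delta>s i f = 0 then N - 1 else N)"
proof (cases "\<exists>i<N. \<forall>f. f \<noteq> 0 \<longrightarrow> \<delta>s i f = 0")
  case True
  then obtain i0 where i0: "i0 < N" "\<forall>f. f \<noteq> 0 \<longrightarrow> \<delta>s i0 f = 0" by blast
  have "i = i0" if "i < N" "\<forall>f. f \<noteq> 0 \<longrightarrow> \<delta>s i f = 0" for i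
  proof (rule ccontr)
    assume "i \<noteq> i0"
    obtain f where f: "f \<noteq> 0" "\<And>j. j < N \<Longrightarrow> j \<noteq> i0 \<Longrightarrow> \<delta>s j f < \<delta>s i0 f"
      using exists_dominant_\<delta>s[OF i0(1)] by blast
    have "\<delta>s i f < \<delta>s i0 f" using f(2) that(1) \<open>i \<noteq> i0\<close> by blast
    thus False using that(2) i0(2) f(1) by simp
  qed
  hence "active_indices = {..<N} - {i0}" using i0 unfolding active_indices_def by blast
  thus ?thesis using True i0(1) by simp
next
  case False
  hence "active_indices = {..<N}" unfolding active_indices_def by blast
  thus ?thesis using False by (simp only: if_False card_lessThan)
qed

lemma irreducible_components_X_infinity:
  "irreducible_components (proj_closed R) (X_infinity \<delta>)
    = (\<lambda>i. proj_zero_set R (semidegree_ideal (\<delta>s i))) ` active_indices"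
  unfolding X_infinity_eq_UN
proof (rule irreducible_components_UN)
  show "finite active_indices" unfolding active_indices_def by simp
  show "proj_closed R (proj_zero_set R (semidegree_ideal (\<delta>s i)))" for i
    using semidegree_ideal_subset unfolding proj_closed_iff by blast
  show "irreducible_wrt (proj_closed R) (proj_zero_set R (semidegree_ideal (\<delta>s i)))"
    if "i \<in> active_indices" for i
    using irreducible_proj_zero_set[OF semidegree_ideal_active_in_Proj[OF that]] .
  show "i = j" if "i \<in> active_indices" "j \<in> active_indices"
    "proj_zero_set R (semidegree_ideal (\<delta>s i)) \<subseteq> proj_zero_set R (semidegree_ideal (\<delta>s j))" for i j
    using proj_zero_set_semidegree_ideal_subset_iff that by blast
qed (auto intro: proj_closed_Un[OF R_mult] proj_closed_empty)

lemma inj_on_proj_zero_set_semidegree_ideal: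
  "inj_on (\<lambda>i. proj_zero_set R (semidegree_ideal (\<delta>s i))) active_indices"
  using proj_zero_set_semidegree_ideal_subset_iff unfolding inj_on_def by blast

end

theorem corollary4p4:
  fixes emb :: "'k::field \<Rightarrow> 'a::idom"
    and \<delta> :: "'a \<Rightarrow> ereal" and \<delta>s :: "nat \<Rightarrow> 'a \<Rightarrow> ereal" and N :: nat
  assumes "alg_closed TYPE('k)"
    and "k_algebra emb"
    and "nonneg_on_nonzero \<delta>"
    and "subdegree_presentation emb \<delta> N \<delta>s"
    and "minimal_presentation N \<delta>s"
  shows "finite (irreducible_components (proj_closed (Rdelta \<delta>)) (X_infinity \<delta>))
    \<and> card (irreducible_components (proj_closed (Rdelta \<delta>)) (X_infinity \<delta>)) =
        (if (\<exists>i<N. \<forall>f. f \<noteq> 0 \<longrightarrow> \<delta>s i f = 0) then N - 1 else N)"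
proof -
  interpret subdegree_algebra emb \<delta> \<delta>s N using assms(2-5) by unfold_locales
  have "finite active_indices" unfolding active_indices_def by simp
  thus ?thesis
    unfolding irreducible_components_X_infinity
    using card_image[OF inj_on_proj_zero_set_semidegree_ideal] card_active_indices by simp
qed

end
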